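(* Let $(F_i)_{i\in\mathbb{Z}}$ be a sequence of $2\times 2$ matrices with non-negative integer entries and determinant $1$, acting on the 2-torus $\mathbb{T}^2=\mathbb{R}^2/\mathbb{Z}^2$ (flat metric inherited from $\mathbb{R}^2$) by multiplication on column vectors, and suppose each $F_i$ is factored as $$F_i=\begin{pmatrix}1&0\\ n_{i,k_i}&1\end{pmatrix}\begin{pmatrix}1&n_{i,k_i-1}\\ 0&1\end{pmatrix}\cdots\begin{pmatrix}1&0\\ n_{i,2}&1\end{pmatrix}\begin{pmatrix}1&n_{i,1}\\ 0&1\end{pmatrix}$$ with non-negative integers $n_{i,1},\dots,n_{i,k_i}$. If $n_{i,k_i}\neq 0$ and $n_{i,1}\neq 0$ for every $i\in\mathbb{Z}$, then $(F_i)_{i\in\mathbb{Z}}$ is an Anosov family on $\mathbb{T}^2$.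
   Context: An Anosov family on a sequence of compact Riemannian manifolds $(M_i)_{i\in\mathbb{Z}}$ (here all equal to $\mathbb{T}^2$) with diffeomorphisms $f_i:M_i\to M_{i+1}$ is one for which the tangent bundle has a continuous splitting $E^s\oplus E^u$ invariant under the derivatives and there are $\lambda\in(0,1)$, $c>0$ with $\|D(f_{i+n-1}\circ\cdots\circ f_i)v\|\le c\lambda^n\|v\|$ for $v\in E^s$ and $\|D(f_{i-n}^{-1}\circ\cdots\circ f_{i-1}^{-1})v\|\le c\lambda^n\|v\|$ for $v\in E^u$, for all $i\in\mathbb{Z}$, $n\ge 1$. *)

theory Defs
  imports "HOL-Analysis.Analysis"
begin

text \<open>The torus T^2 = R^2/Z^2 is represented by R^2 together with Z^2-periodicity of
  all point-dependent data; the tangent space at every point is R^2 with the flat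
  (Euclidean) metric, and the derivative of the torus map induced by an integer
  matrix A is A itself at every point.\<close>

definition upper_elem :: "nat \<Rightarrow> real^2^2" where
  "upper_elem m = (\<chi> a b. if a = b then 1 else if a = 1 \<and> b = 2 then real m else 0)"

definition lower_elem :: "nat \<Rightarrow> real^2^2" where
  "lower_elem m = (\<chi> a b. if a = b then 1 else if a = 2 \<and> b = 1 then real m else 0)"

definition elem_factor :: "nat \<Rightarrow> nat \<Rightarrow> real^2^2" where
  "elem_factor j m = (if odd j then upper_elem m else lower_elem m)"

fun factor_prod :: "(nat \<Rightarrow> nat) \<Rightarrow> nat \<Rightarrow> real^2^2" where
  "factor_prod ns 0 = mat 1"
| "factor_prod ns (Suc j) = elem_factor (Suc j) (ns (Suc j)) ** factor_prod ns j"

text \<open>Forward cocycle: A(i+n-1) ** ... ** A(i); derivative of f_{i+n-1} o ... o f_i.\<close>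
fun fwd_cocycle :: "(int \<Rightarrow> real^2^2) \<Rightarrow> int \<Rightarrow> nat \<Rightarrow> real^2^2" where
  "fwd_cocycle A i 0 = mat 1"
| "fwd_cocycle A i (Suc n) = A (i + int n) ** fwd_cocycle A i n"

text \<open>Backward cocycle: A(i-n)^-1 ** ... ** A(i-1)^-1;
  derivative of f_{i-n}^-1 o ... o f_{i-1}^-1.\<close>
fun bwd_cocycle :: "(int \<Rightarrow> real^2^2) \<Rightarrow> int \<Rightarrow> nat \<Rightarrow> real^2^2" where
  "bwd_cocycle A i 0 = mat 1"
| "bwd_cocycle A i (Suc n) = matrix_inv (A (i - int (Suc n))) ** bwd_cocycle A i n"

definition integer_vec :: "real^2 \<Rightarrow> bool" where
  "integer_vec z \<longleftrightarrow> (\<forall>j. z $ j \<in> \<int>)"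

definition split_proj :: "(real^2) set \<Rightarrow> (real^2) set \<Rightarrow> real^2 \<Rightarrow> real^2" where
  "split_proj S U v = (THE a. a \<in> S \<and> v - a \<in> U)"

text \<open>Anosov family for the sequence of torus diffeomorphisms x \<mapsto> A i x mod Z^2
  (A i integer matrices with det = +-1). Es i x, Eu i x are the stable/unstable
  subspaces of the tangent space at the point [x] of the i-th copy of T^2.\<close>
definition anosov_family_torus :: "(int \<Rightarrow> real^2^2) \<Rightarrow> bool" where
  "anosov_family_torus A \<longleftrightarrow>
    (\<forall>i. (\<forall>a b. A i $ a $ b \<in> \<int>) \<and> \<bar>det (A i)\<bar> = 1) \<and>
    (\<exists>Es Eu :: int \<Rightarrow> real^2 \<Rightarrow> (real^2) set.
       (\<forall>i x. subspace (Es i x) \<and> subspace (Eu i x) \<and>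
              Es i x \<inter> Eu i x = {0} \<and> (\<forall>v. \<exists>a\<in>Es i x. \<exists>b\<in>Eu i x. v = a + b)) \<and>
       (\<forall>i x z. integer_vec z \<longrightarrow> Es i (x + z) = Es i x \<and> Eu i (x + z) = Eu i x) \<and>
       (\<forall>i v. continuous_on UNIV (\<lambda>x. split_proj (Es i x) (Eu i x) v)) \<and>
       (\<forall>i x. (\<lambda>v. A i *v v) ` Es i x = Es (i + 1) (A i *v x) \<and>
              (\<lambda>v. A i *v v) ` Eu i x = Eu (i + 1) (A i *v x)) \<and>
       (\<exists>lam c::real. 0 < lam \<and> lam < 1 \<and> 0 < c \<and>
          (\<forall>i x n v. 1 \<le> n \<longrightarrow> v \<in> Es i x \<longrightarrow>
              norm (fwd_cocycle A i n *v v) \<le> c * lam ^ n * norm v) \<and>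
          (\<forall>i x n v. 1 \<le> n \<longrightarrow> v \<in> Eu i x \<longrightarrow>
              norm (bwd_cocycle A i n *v v) \<le> c * lam ^ n * norm v)))"

end

theory Submission
  imports Defs
begin

text \<open>Every \<open>F i\<close> has all entries \<open>\<ge> 1\<close>: products of elementary factors have diagonal
  entries \<open>\<ge> 1\<close>, the first factor forces the upper right entry to be \<open>\<ge> n i 1\<close> and the last
  one forces the lower left entry to be \<open>\<ge> 1\<close>. Such a matrix maps the cone \<open>w\<^sub>1 w\<^sub>2 \<ge> 0\<close> into
  itself and at least doubles the \<open>l\<^sup>1\<close>-norm there, and since the determinant is 1 its inverse
  does the same on the opposite cone \<open>w\<^sub>1 w\<^sub>2 \<le> 0\<close>. Hence a vector with bounded forward orbit
  never leaves the opposite cone and its orbit contracts by a factor 2 at every step; such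
  vectors exist by a nested compactness argument. Symmetrically for backward orbits. The two
  resulting lines lie in complementary open cones, so they split the plane; being independent of
  the base point they are trivially continuous and \<open>\<int>\<^sup>2\<close>-periodic.\<close>

section \<open>Entries of products of elementary matrices\<close>

lemma vec2_eq_iff: "(v::'a^2) = w \<longleftrightarrow> v$1 = w$1 \<and> v$2 = w$2"
  by (simp add: vec_eq_iff forall_2)

lemma mat2_eq_iff:
  "(A::'a^2^2) = B \<longleftrightarrow> A$1$1 = B$1$1 \<and> A$1$2 = B$1$2 \<and> A$2$1 = B$2$1 \<and> A$2$2 = B$2$2"
  by (simp add: vec_eq_iff forall_2)

lemma matrix_vector_mult_2:
  "((A::real^2^2) *v v) $ 1 = A$1$1 * v$1 + A$1$2 * v$2"
  "((A::real^2^2) *v v) $ 2 = A$2$1 * v$1 + A$2$2 * v$2"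
  by (simp_all add: matrix_vector_mult_def sum_2)

lemma matrix_matrix_mult_2:
  "((A::real^2^2) ** B) $ i $ j = A$i$1 * B$1$j + A$i$2 * B$2$j"
  by (simp add: matrix_matrix_mult_def sum_2)

lemma mat_1_2_entries:
  "(mat 1 :: real^2^2)$1$1 = 1" "(mat 1 :: real^2^2)$2$2 = 1"
  "(mat 1 :: real^2^2)$1$2 = 0" "(mat 1 :: real^2^2)$2$1 = 0"
  by (simp_all add: mat_def)

lemma upper_elem_entries:
  "upper_elem m $1$1 = 1" "upper_elem m $2$2 = 1" "upper_elem m $1$2 = real m" "upper_elem m $2$1 = 0"
  by (simp_all add: upper_elem_def)

lemma lower_elem_entries:
  "lower_elem m $1$1 = 1" "lower_elem m $2$2 = 1" "lower_elem m $1$2 = 0" "lower_elem m $2$1 = real m"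
  by (simp_all add: lower_elem_def)

lemma factor_prod_diag_ge_1_offdiag_nonneg:
  "1 \<le> factor_prod ns j $1$1 \<and> 1 \<le> factor_prod ns j $2$2 \<and>
   0 \<le> factor_prod ns j $1$2 \<and> 0 \<le> factor_prod ns j $2$1"
  by (induction j)
    (auto simp: elem_factor_def matrix_matrix_mult_2 mat_1_2_entries upper_elem_entries
       lower_elem_entries add_increasing add_increasing2)

lemma factor_prod_upper_right_ge:
  assumes "1 \<le> j"
  shows "real (ns 1) \<le> factor_prod ns j $1$2"
  using assms
proof (induction j rule: dec_induct)
  case base
  show ?case
    by (simp add: elem_factor_def matrix_matrix_mult_2 mat_1_2_entries upper_elem_entries)
next
  case (step j)
  then show ?case
    using factor_prod_diag_ge_1_offdiag_nonneg[of ns j]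
    by (auto simp: elem_factor_def matrix_matrix_mult_2 upper_elem_entries lower_elem_entries
        intro: add_increasing2)
qed

lemma factor_prod_lower_left_ge:
  assumes "even k" "0 < k" "ns k \<noteq> 0"
  shows "1 \<le> factor_prod ns k $2$1"
proof -
  obtain j where k: "k = Suc j"
    using assms(2) gr0_implies_Suc by blast
  have "factor_prod ns k $2$1 = real (ns k) * factor_prod ns j $1$1 + factor_prod ns j $2$1"
    using assms(1) by (simp add: k elem_factor_def matrix_matrix_mult_2 lower_elem_entries)
  moreover have "1 \<le> real (ns k) * factor_prod ns j $1$1"
    using assms(3) factor_prod_diag_ge_1_offdiag_nonneg[of ns j] mult_mono[of 1 "real (ns k)" 1]
    by simp
  ultimately show ?thesis
    using factor_prod_diag_ge_1_offdiag_nonneg[of ns j] by linarith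
qed

lemma factor_prod_entries_ge_1:
  assumes "even k" "0 < k" "ns k \<noteq> 0" "ns 1 \<noteq> 0"
  shows "1 \<le> factor_prod ns k $ a $ b"
proof -
  have "real (ns 1) \<le> factor_prod ns k $1$2"
    using assms(2) by (intro factor_prod_upper_right_ge) simp
  then have "1 \<le> factor_prod ns k $1$2"
    using assms(4) by linarith
  then show ?thesis
    using factor_prod_diag_ge_1_offdiag_nonneg[of ns k] factor_prod_lower_left_ge[of k ns] assms
      exhaust_2[of a] exhaust_2[of b]
    by auto
qed

section \<open>Cones and the \<open>l\<^sup>1\<close>-norm in the plane\<close>

definition quadrant_cone :: "real \<Rightarrow> (real^2) set" where
  "quadrant_cone s = {w. 0 \<le> s * (w$1 * w$2)}"

definition l1_norm :: "real^2 \<Rightarrow> real" where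
  "l1_norm w = \<bar>w$1\<bar> + \<bar>w$2\<bar>"

lemma zero_in_quadrant_cone: "0 \<in> quadrant_cone s"
  by (simp add: quadrant_cone_def)

lemma scaleR_in_quadrant_cone: "w \<in> quadrant_cone s \<Longrightarrow> c *\<^sub>R w \<in> quadrant_cone s"
  by (simp add: quadrant_cone_def algebra_simps)
    (metis mult.assoc mult_nonneg_nonneg zero_le_square)

lemma quadrant_cone_cases: "s = 1 \<or> s = -1 \<Longrightarrow> w \<in> quadrant_cone s \<or> w \<in> quadrant_cone (-s)"
  by (auto simp: quadrant_cone_def)

lemma closed_quadrant_cone: "closed (quadrant_cone s)"
  unfolding quadrant_cone_def by (intro closed_Collect_le continuous_intros)

lemma l1_norm_pos: "v \<noteq> 0 \<Longrightarrow> 0 < l1_norm v"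
  by (auto simp: l1_norm_def vec2_eq_iff)

lemma l1_norm_add: "l1_norm (x + y) \<le> l1_norm x + l1_norm y"
  by (simp add: l1_norm_def abs_triangle_ineq add_mono)

lemma l1_norm_scaleR: "l1_norm (c *\<^sub>R x) = \<bar>c\<bar> * l1_norm x"
  by (simp add: l1_norm_def abs_mult algebra_simps)

lemma norm_le_l1_norm: "norm x \<le> l1_norm x"
  using norm_le_l1_cart[of x] by (simp add: sum_2 l1_norm_def)

lemma l1_norm_le_2_norm: "l1_norm x \<le> 2 * norm x"
  using component_le_norm_cart[of x 1] component_le_norm_cart[of x 2] by (simp add: l1_norm_def)

lemma same_sign_combinations_expand:
  fixes x y a b c d :: real
  assumes "0 \<le> x * y" "1 \<le> a" "1 \<le> b" "1 \<le> c" "1 \<le> d"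
  shows "0 \<le> (a * x + b * y) * (c * x + d * y)
    \<and> 2 * (\<bar>x\<bar> + \<bar>y\<bar>) \<le> \<bar>a * x + b * y\<bar> + \<bar>c * x + d * y\<bar>"
proof -
  consider "0 \<le> x" "0 \<le> y" | "x \<le> 0" "y \<le> 0"
    using assms(1) by (meson zero_le_mult_iff)
  then show ?thesis
  proof cases
    case 1
    have "x \<le> a * x" "y \<le> b * y" "x \<le> c * x" "y \<le> d * y"
      using 1 assms(2-5) mult_right_mono[of 1 _ x] mult_right_mono[of 1 _ y] by auto
    then show ?thesis using 1 by simp
  next
    case 2
    have "a * x \<le> x" "b * y \<le> y" "c * x \<le> x" "d * y \<le> y"
      using 2 assms(2-5) mult_right_mono_neg[of 1 _ x] mult_right_mono_neg[of 1 _ y] by auto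
    then show ?thesis using 2 by (simp add: mult_nonpos_nonpos)
  qed
qed

lemma quadrant_cone_expand:
  fixes B :: "real^2^2"
  assumes s: "s = 1 \<or> s = -1"
    and B: "1 \<le> B$1$1" "1 \<le> s * B$1$2" "1 \<le> s * B$2$1" "1 \<le> B$2$2"
    and w: "w \<in> quadrant_cone s"
  shows "B *v w \<in> quadrant_cone s \<and> 2 * l1_norm w \<le> l1_norm (B *v w)"
proof -
  have ss: "s * s = 1" and abs_s: "\<bar>s\<bar> = 1"
    using s by auto
  have "0 \<le> w$1 * (s * w$2)"
    using w by (simp add: quadrant_cone_def algebra_simps)
  from same_sign_combinations_expand[OF this B]
  have "0 \<le> (B$1$1 * w$1 + s * B$1$2 * (s * w$2)) * (s * B$2$1 * w$1 + B$2$2 * (s * w$2)) \<and>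
        2 * (\<bar>w$1\<bar> + \<bar>s * w$2\<bar>)
          \<le> \<bar>B$1$1 * w$1 + s * B$1$2 * (s * w$2)\<bar> + \<bar>s * B$2$1 * w$1 + B$2$2 * (s * w$2)\<bar>" .
  moreover have "B$1$1 * w$1 + s * B$1$2 * (s * w$2) = (B *v w)$1"
    by (simp add: matrix_vector_mult_2 mult.commute mult.left_commute ss)
  moreover have "s * B$2$1 * w$1 + B$2$2 * (s * w$2) = s * (B *v w)$2"
    by (simp add: matrix_vector_mult_2 distrib_left mult.commute mult.left_commute)
  ultimately have "0 \<le> (B *v w)$1 * (s * (B *v w)$2)"
    "2 * (\<bar>w$1\<bar> + \<bar>w$2\<bar>) \<le> \<bar>(B *v w)$1\<bar> + \<bar>(B *v w)$2\<bar>"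
    by (simp_all add: abs_mult abs_s)
  then show ?thesis
    by (simp add: quadrant_cone_def l1_norm_def mult.left_commute)
qed

definition adjugate2 :: "real^2^2 \<Rightarrow> real^2^2" where
  "adjugate2 A = (\<chi> i j. if i = 1 \<and> j = 1 then A$2$2 else if i = 2 \<and> j = 2 then A$1$1
     else - A$i$j)"

lemma adjugate2_entries:
  "adjugate2 A $1$1 = A$2$2" "adjugate2 A $1$2 = - A$1$2"
  "adjugate2 A $2$1 = - A$2$1" "adjugate2 A $2$2 = A$1$1"
  by (simp_all add: adjugate2_def)

lemma matrix_inv_eq_adjugate2:
  fixes A :: "real^2^2"
  assumes "det A = 1"
  shows "A ** adjugate2 A = mat 1" "adjugate2 A ** A = mat 1" "matrix_inv A = adjugate2 A"
proof -
  have det: "A$1$1 * A$2$2 - A$1$2 * A$2$1 = 1"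
    using assms by (simp add: det_2)
  show right: "A ** adjugate2 A = mat 1" and left: "adjugate2 A ** A = mat 1"
    using det by (simp_all add: mat2_eq_iff matrix_matrix_mult_2 adjugate2_entries mat_1_2_entries
        algebra_simps)
  then have "\<exists>B. A ** B = mat 1 \<and> B ** A = mat 1"
    by blast
  then have "A ** matrix_inv A = mat 1 \<and> matrix_inv A ** A = mat 1"
    unfolding matrix_inv_def by (rule someI_ex)
  then have "matrix_inv A = matrix_inv A ** (A ** adjugate2 A)"
    using right by (simp add: matrix_mul_rid)
  also have "\<dots> = adjugate2 A"
    using \<open>A ** matrix_inv A = mat 1 \<and> matrix_inv A ** A = mat 1\<close>
    by (simp add: matrix_mul_assoc matrix_mul_lid)
  finally show "matrix_inv A = adjugate2 A" .
qed

lemma norm_le_if_l1_norm_le: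
  assumes "l1_norm x \<le> c * l1_norm y" "0 \<le> c"
  shows "norm x \<le> 2 * c * norm y"
  using norm_le_l1_norm[of x] assms mult_left_mono[OF l1_norm_le_2_norm[of y] assms(2)] by simp

lemma vec2_decompose:
  fixes p q v :: "real^2"
  assumes "p$1 * p$2 < 0" "0 < q$1 * q$2"
  shows "\<exists>\<alpha> \<beta>. v = \<alpha> *\<^sub>R p + \<beta> *\<^sub>R q"
proof -
  define D where "D = p$1 * q$2 - p$2 * q$1"
  have "(p$1 * q$2) * (p$2 * q$1) < 0"
    using mult_neg_pos[OF assms] by (simp add: algebra_simps)
  then have "D \<noteq> 0"
    by (auto simp: D_def)
  define \<alpha> where "\<alpha> = (v$1 * q$2 - v$2 * q$1) / D"
  define \<beta> where "\<beta> = (p$1 * v$2 - p$2 * v$1) / D"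
  have "\<alpha> * p$1 + \<beta> * q$1 = (v$1 * D) / D" "\<alpha> * p$2 + \<beta> * q$2 = (v$2 * D) / D"
    unfolding \<alpha>_def \<beta>_def D_def by (simp_all add: add_divide_distrib[symmetric] algebra_simps)
  then have "v = \<alpha> *\<^sub>R p + \<beta> *\<^sub>R q"
    using \<open>D \<noteq> 0\<close> by (simp add: vec2_eq_iff)
  then show ?thesis by blast
qed

section \<open>Orbits of cone-expanding sequences\<close>

fun cocycle :: "(nat \<Rightarrow> real^2^2) \<Rightarrow> nat \<Rightarrow> real^2^2" where
  "cocycle M 0 = mat 1"
| "cocycle M (Suc n) = M n ** cocycle M n"

lemma cocycle_Suc_mult: "cocycle M (Suc n) *v v = M n *v (cocycle M n *v v)"
  by (simp add: matrix_vector_mul_assoc)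

lemma cocycle_Suc_shift: "cocycle M (Suc n) = cocycle (\<lambda>m. M (Suc m)) n ** M 0"
  by (induction n) (simp_all add: matrix_mul_assoc)

definition bounded_orbit :: "(nat \<Rightarrow> real^2^2) \<Rightarrow> (real^2) set" where
  "bounded_orbit M = {v. \<exists>B. \<forall>n. l1_norm (cocycle M n *v v) \<le> B}"

lemma subspace_bounded_orbit: "subspace (bounded_orbit M)"
  unfolding subspace_def
proof (intro conjI ballI allI)
  show "0 \<in> bounded_orbit M"
    by (auto simp: bounded_orbit_def l1_norm_def)
next
  fix x y assume "x \<in> bounded_orbit M" "y \<in> bounded_orbit M"
  then obtain B1 B2
    where "\<And>n. l1_norm (cocycle M n *v x) \<le> B1" "\<And>n. l1_norm (cocycle M n *v y) \<le> B2"
    by (auto simp: bounded_orbit_def)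
  then have "\<forall>n. l1_norm (cocycle M n *v (x + y)) \<le> B1 + B2"
    using l1_norm_add by (smt (verit) matrix_vector_right_distrib)
  then show "x + y \<in> bounded_orbit M"
    by (auto simp: bounded_orbit_def)
next
  fix c x assume "x \<in> bounded_orbit M"
  then obtain B where "\<forall>n. l1_norm (cocycle M n *v x) \<le> B"
    by (auto simp: bounded_orbit_def)
  then have "\<forall>n. l1_norm (cocycle M n *v (c *\<^sub>R x)) \<le> \<bar>c\<bar> * B"
    by (simp add: matrix_vector_mult_scaleR l1_norm_scaleR mult_left_mono)
  then show "c *\<^sub>R x \<in> bounded_orbit M"
    by (auto simp: bounded_orbit_def)
qed

lemma bounded_orbit_shift_iff:
  "v \<in> bounded_orbit M \<longleftrightarrow> M 0 *v v \<in> bounded_orbit (\<lambda>m. M (Suc m))"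
proof -
  have shift: "cocycle M (Suc n) *v v = cocycle (\<lambda>m. M (Suc m)) n *v (M 0 *v v)" for n
    by (simp only: cocycle_Suc_shift matrix_vector_mul_assoc)
  have "(\<exists>B. \<forall>n. l1_norm (cocycle M n *v v) \<le> B) \<longleftrightarrow>
        (\<exists>B. \<forall>n. l1_norm (cocycle M (Suc n) *v v) \<le> B)"
  proof
    assume "\<exists>B. \<forall>n. l1_norm (cocycle M (Suc n) *v v) \<le> B"
    then obtain B where "\<forall>n. l1_norm (cocycle M (Suc n) *v v) \<le> B" ..
    then have "l1_norm (cocycle M n *v v) \<le> max B (l1_norm v)" for n
      by (cases n) (auto simp only: cocycle.simps(1) matrix_vector_mul_lid le_max_iff_disj)
    then show "\<exists>B. \<forall>n. l1_norm (cocycle M n *v v) \<le> B" by blast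
  qed blast
  then show ?thesis
    by (simp only: bounded_orbit_def mem_Collect_eq shift)
qed

locale cone_expanding_sequence =
  fixes M N :: "nat \<Rightarrow> real^2^2" and s :: real
  assumes sign: "s = 1 \<or> s = -1"
    and inverse_left: "\<And>n. N n ** M n = mat 1"
    and inverse_right: "\<And>n. M n ** N n = mat 1"
    and N_expands: "\<And>n w. w \<in> quadrant_cone s \<Longrightarrow>
      N n *v w \<in> quadrant_cone s \<and> 2 * l1_norm w \<le> l1_norm (N n *v w)"
    and M_expands: "\<And>n w. w \<in> quadrant_cone (-s) \<Longrightarrow>
      M n *v w \<in> quadrant_cone (-s) \<and> 2 * l1_norm w \<le> l1_norm (M n *v w)"
begin

lemma cocycle_from_Suc: "cocycle M n *v v = N n *v (cocycle M (Suc n) *v v)"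
  by (simp add: matrix_vector_mul_assoc matrix_mul_assoc inverse_left)

lemma cone_orbit_downward_closed:
  "m \<le> n \<Longrightarrow> cocycle M n *v v \<in> quadrant_cone s \<Longrightarrow> cocycle M m *v v \<in> quadrant_cone s"
  by (induction n rule: dec_induct) (use N_expands cocycle_from_Suc in metis)+

lemma opposite_cone_orbit_grows:
  assumes "cocycle M m *v v \<in> quadrant_cone (-s)"
  shows "cocycle M (m + d) *v v \<in> quadrant_cone (-s)
    \<and> 2^d * l1_norm (cocycle M m *v v) \<le> l1_norm (cocycle M (m + d) *v v)"
proof (induction d)
  case 0
  show ?case using assms by simp
next
  case (Suc d)
  then have "cocycle M (m + d) *v v \<in> quadrant_cone (-s)" by blast
  from M_expands[OF this, of "m + d"] Suc show ?case
    by (simp only: add_Suc_right cocycle_Suc_mult) simp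
qed

lemma opposite_cone_orbit_unbounded:
  assumes "cocycle M m *v v \<in> quadrant_cone (-s)" "cocycle M m *v v \<noteq> 0"
  shows "v \<notin> bounded_orbit M"
proof
  assume "v \<in> bounded_orbit M"
  then obtain B where B: "\<And>n. l1_norm (cocycle M n *v v) \<le> B"
    by (auto simp: bounded_orbit_def)
  have pos: "0 < l1_norm (cocycle M m *v v)"
    using assms(2) by (rule l1_norm_pos)
  obtain d :: nat where "B / l1_norm (cocycle M m *v v) < 2^d"
    using real_arch_pow[of 2] by auto
  then have "B < 2^d * l1_norm (cocycle M m *v v)"
    using pos by (simp add: pos_divide_less_eq)
  also have "\<dots> \<le> l1_norm (cocycle M (m + d) *v v)"
    using opposite_cone_orbit_grows[OF assms(1)] by blast
  finally show False
    using B[of "m + d"] by simp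
qed

lemma bounded_orbit_in_cone:
  assumes "v \<in> bounded_orbit M"
  shows "cocycle M n *v v \<in> quadrant_cone s"
  using assms opposite_cone_orbit_unbounded quadrant_cone_cases[OF sign] zero_in_quadrant_cone
  by metis

lemma bounded_orbit_inter_opposite_cone:
  "v \<in> bounded_orbit M \<Longrightarrow> v \<in> quadrant_cone (-s) \<Longrightarrow> v = 0"
  using opposite_cone_orbit_unbounded[of 0 v] by auto

lemma cone_orbit_contracts:
  assumes "\<And>n. cocycle M n *v v \<in> quadrant_cone s"
  shows "l1_norm (cocycle M n *v v) \<le> (1/2)^n * l1_norm v"
proof (induction n)
  case 0
  show ?case by simp
next
  case (Suc n)
  have "2 * l1_norm (cocycle M (Suc n) *v v) \<le> l1_norm (cocycle M n *v v)"
    using N_expands[OF assms[of "Suc n"], of n] cocycle_from_Suc[of n v] by simp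
  then show ?case
    using Suc by simp
qed

lemma bounded_orbit_contracts:
  "v \<in> bounded_orbit M \<Longrightarrow> l1_norm (cocycle M n *v v) \<le> (1/2)^n * l1_norm v"
  using bounded_orbit_in_cone cone_orbit_contracts by blast

lemma cone_orbit_preimage: "w \<in> quadrant_cone s \<Longrightarrow> \<exists>v\<in>quadrant_cone s. cocycle M n *v v = w"
proof (induction n arbitrary: w)
  case 0
  then show ?case by auto
next
  case (Suc n)
  obtain v where "v \<in> quadrant_cone s" "cocycle M n *v v = N n *v w"
    using Suc.IH N_expands[OF Suc.prems] by blast
  moreover have "M n *v (N n *v w) = w"
    by (simp add: matrix_vector_mul_assoc inverse_right)
  ultimately show ?case
    by (metis cocycle_Suc_mult)
qed

lemma exists_cone_orbit: "\<exists>v. v \<noteq> 0 \<and> (\<forall>n. cocycle M n *v v \<in> quadrant_cone s)"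
proof -
  define K where "K n = {v. cocycle M n *v v \<in> quadrant_cone s}" for n
  have closed_K: "closed (K n)" for n
    unfolding K_def vimage_def[symmetric]
    by (intro continuous_closed_vimage closed_quadrant_cone continuous_intros)
  have sphere_meets_K: "sphere 0 1 \<inter> K n \<noteq> {}" for n
  proof -
    define w :: "real^2" where "w = vector [1, s]"
    have "w \<in> quadrant_cone s"
      using sign by (auto simp: w_def quadrant_cone_def)
    then obtain v where v: "v \<in> quadrant_cone s" "cocycle M n *v v = w"
      using cone_orbit_preimage by blast
    have "v \<noteq> 0"
    proof
      assume "v = 0"
      then have "w = 0" using v(2) by simp
      then show False by (simp add: w_def vec2_eq_iff)
    qed
    then have "(1 / norm v) *\<^sub>R v \<in> sphere 0 1"
      by simp
    moreover have "(1 / norm v) *\<^sub>R v \<in> K n"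
      using scaleR_in_quadrant_cone[OF \<open>w \<in> quadrant_cone s\<close>]
      by (simp add: K_def matrix_vector_mult_scaleR v(2))
    ultimately show ?thesis by blast
  qed
  have "sphere 0 1 \<inter> (\<Inter>n\<in>UNIV. K n) \<noteq> {}"
  proof (rule compact_imp_fip_image[OF compact_sphere closed_K])
    fix I :: "nat set" assume "finite I"
    then have "i \<le> Max (insert 0 I)" if "i \<in> I" for i
      using that by simp
    then have "K (Max (insert 0 I)) \<subseteq> K i" if "i \<in> I" for i
      using that cone_orbit_downward_closed by (auto simp: K_def)
    then show "sphere 0 1 \<inter> (\<Inter>i\<in>I. K i) \<noteq> {}"
      using sphere_meets_K[of "Max (insert 0 I)"] by blast
  qed
  then obtain v where "v \<in> sphere 0 1" "\<And>n. v \<in> K n"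
    by blast
  then show ?thesis
    by (metis K_def mem_Collect_eq mem_sphere_0 norm_zero zero_neq_one)
qed

lemma bounded_orbit_nontrivial: "\<exists>v. v \<noteq> 0 \<and> v \<in> bounded_orbit M"
proof -
  obtain v where "v \<noteq> 0" and cone: "\<And>n. cocycle M n *v v \<in> quadrant_cone s"
    using exists_cone_orbit by blast
  have "l1_norm (cocycle M n *v v) \<le> l1_norm v" for n
    by (rule order_trans[OF cone_orbit_contracts[OF cone]])
      (simp add: mult_left_le_one_le power_le_one l1_norm_def)
  then show ?thesis
    using \<open>v \<noteq> 0\<close> by (auto simp: bounded_orbit_def)
qed

end

section \<open>Sequences of positive matrices of determinant one\<close>

lemma fwd_cocycle_eq_cocycle: "fwd_cocycle A i n = cocycle (\<lambda>m. A (i + int m)) n"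
  by (induction n) auto

lemma bwd_cocycle_eq_cocycle: "bwd_cocycle A i n = cocycle (\<lambda>m. matrix_inv (A (i - int (Suc m)))) n"
  by (induction n) auto

definition stable_space :: "(int \<Rightarrow> real^2^2) \<Rightarrow> int \<Rightarrow> (real^2) set" where
  "stable_space A i = bounded_orbit (\<lambda>m. A (i + int m))"

definition unstable_space :: "(int \<Rightarrow> real^2^2) \<Rightarrow> int \<Rightarrow> (real^2) set" where
  "unstable_space A i = bounded_orbit (\<lambda>m. matrix_inv (A (i - int (Suc m))))"

locale positive_unimodular_sequence =
  fixes A :: "int \<Rightarrow> real^2^2"
  assumes entries_ge_1: "\<And>i a b. 1 \<le> A i $ a $ b"
    and det_eq_1: "\<And>i. det (A i) = 1"
begin

lemma matrix_inv_eq_adjugate: "matrix_inv (A i) = adjugate2 (A i)"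
  and mult_adjugate: "A i ** adjugate2 (A i) = mat 1"
  and adjugate_mult: "adjugate2 (A i) ** A i = mat 1"
  using matrix_inv_eq_adjugate2[OF det_eq_1] by blast+

lemma expands_quadrant_cone:
  "w \<in> quadrant_cone 1 \<Longrightarrow> A i *v w \<in> quadrant_cone 1 \<and> 2 * l1_norm w \<le> l1_norm (A i *v w)"
  by (rule quadrant_cone_expand) (simp_all add: entries_ge_1)

lemma adjugate_expands_opposite_cone:
  "w \<in> quadrant_cone (-1) \<Longrightarrow>
    adjugate2 (A i) *v w \<in> quadrant_cone (-1) \<and> 2 * l1_norm w \<le> l1_norm (adjugate2 (A i) *v w)"
  by (rule quadrant_cone_expand) (simp_all add: adjugate2_entries entries_ge_1)

lemma forward_cone_expanding:
  "cone_expanding_sequence (\<lambda>m. A (i + int m)) (\<lambda>m. adjugate2 (A (i + int m))) (-1)"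
  by unfold_locales (simp_all add: mult_adjugate adjugate_mult expands_quadrant_cone
      adjugate_expands_opposite_cone)

lemma backward_cone_expanding:
  "cone_expanding_sequence (\<lambda>m. matrix_inv (A (i - int (Suc m)))) (\<lambda>m. A (i - int (Suc m))) 1"
  by unfold_locales (simp_all add: matrix_inv_eq_adjugate mult_adjugate adjugate_mult
      expands_quadrant_cone adjugate_expands_opposite_cone)

lemma subspace_stable_space: "subspace (stable_space A i)"
  and subspace_unstable_space: "subspace (unstable_space A i)"
  by (simp_all add: stable_space_def unstable_space_def subspace_bounded_orbit)

lemma stable_inter_unstable: "stable_space A i \<inter> unstable_space A i = {0}"
proof -
  have "v = 0" if "v \<in> stable_space A i" "v \<in> unstable_space A i" for v
    using quadrant_cone_cases[of 1 v] that
      cone_expanding_sequence.bounded_orbit_inter_opposite_cone[OF forward_cone_expanding[of i], of v]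
      cone_expanding_sequence.bounded_orbit_inter_opposite_cone[OF backward_cone_expanding[of i], of v]
    by (auto simp: stable_space_def unstable_space_def)
  then show ?thesis
    using subspace_0[OF subspace_stable_space] subspace_0[OF subspace_unstable_space] by blast
qed

lemma stable_plus_unstable: "\<exists>a\<in>stable_space A i. \<exists>b\<in>unstable_space A i. v = a + b"
proof -
  obtain p where p: "p \<noteq> 0" "p \<in> stable_space A i"
    using cone_expanding_sequence.bounded_orbit_nontrivial[OF forward_cone_expanding[of i]]
    by (auto simp: stable_space_def)
  obtain q where q: "q \<noteq> 0" "q \<in> unstable_space A i"
    using cone_expanding_sequence.bounded_orbit_nontrivial[OF backward_cone_expanding[of i]]
    by (auto simp: unstable_space_def)
  have "p \<notin> quadrant_cone 1"
    using p cone_expanding_sequence.bounded_orbit_inter_opposite_cone[OF forward_cone_expanding[of i]]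
    by (auto simp: stable_space_def)
  moreover have "q \<notin> quadrant_cone (-1)"
    using q cone_expanding_sequence.bounded_orbit_inter_opposite_cone[OF backward_cone_expanding[of i]]
    by (auto simp: unstable_space_def)
  ultimately obtain \<alpha> \<beta> where "v = \<alpha> *\<^sub>R p + \<beta> *\<^sub>R q"
    using vec2_decompose[of p q v] by (auto simp: quadrant_cone_def)
  moreover have "\<alpha> *\<^sub>R p \<in> stable_space A i" "\<beta> *\<^sub>R q \<in> unstable_space A i"
    using p(2) q(2) subspace_scale[OF subspace_stable_space]
      subspace_scale[OF subspace_unstable_space] by blast+
  ultimately show ?thesis by blast
qed

lemma stable_space_Suc_iff: "v \<in> stable_space A i \<longleftrightarrow> A i *v v \<in> stable_space A (i + 1)"
proof -
  have "stable_space A (i + 1) = bounded_orbit (\<lambda>m. A (i + int (Suc m)))"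
    by (simp add: stable_space_def add.assoc)
  then show ?thesis
    using bounded_orbit_shift_iff[of v "\<lambda>m. A (i + int m)"] by (simp add: stable_space_def)
qed

lemma unstable_space_Suc_iff: "v \<in> unstable_space A i \<longleftrightarrow> A i *v v \<in> unstable_space A (i + 1)"
proof -
  have "unstable_space A i = bounded_orbit (\<lambda>m. matrix_inv (A (i + 1 - int (Suc (Suc m)))))"
    by (simp add: unstable_space_def diff_diff_eq add.commute)
  moreover have "matrix_inv (A i) *v (A i *v v) = v"
    by (simp add: matrix_inv_eq_adjugate matrix_vector_mul_assoc adjugate_mult)
  ultimately show ?thesis
    using bounded_orbit_shift_iff[of "A i *v v" "\<lambda>m. matrix_inv (A (i + 1 - int (Suc m)))"]
    by (simp add: unstable_space_def)
qed

lemma image_eq_if_preimage_iff: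
  assumes "\<And>v. v \<in> S i \<longleftrightarrow> A i *v v \<in> S (i + 1)"
  shows "(\<lambda>v. A i *v v) ` S i = S (i + 1)"
proof
  show "(\<lambda>v. A i *v v) ` S i \<subseteq> S (i + 1)"
    using assms by blast
  show "S (i + 1) \<subseteq> (\<lambda>v. A i *v v) ` S i"
  proof
    fix w assume "w \<in> S (i + 1)"
    moreover have w: "A i *v (adjugate2 (A i) *v w) = w"
      by (simp add: matrix_vector_mul_assoc mult_adjugate)
    ultimately have "adjugate2 (A i) *v w \<in> S i"
      using assms by simp
    with w show "w \<in> (\<lambda>v. A i *v v) ` S i"
      by force
  qed
qed

lemma stable_space_contracts:
  "v \<in> stable_space A i \<Longrightarrow> norm (fwd_cocycle A i n *v v) \<le> 2 * (1/2)^n * norm v"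
  using cone_expanding_sequence.bounded_orbit_contracts[OF forward_cone_expanding[of i]]
  by (simp add: stable_space_def fwd_cocycle_eq_cocycle norm_le_if_l1_norm_le)

lemma unstable_space_contracts:
  "v \<in> unstable_space A i \<Longrightarrow> norm (bwd_cocycle A i n *v v) \<le> 2 * (1/2)^n * norm v"
  using cone_expanding_sequence.bounded_orbit_contracts[OF backward_cone_expanding[of i]]
  by (simp add: unstable_space_def bwd_cocycle_eq_cocycle norm_le_if_l1_norm_le)

theorem anosov_family_torus:
  assumes "\<And>i a b. A i $ a $ b \<in> \<int>"
  shows "anosov_family_torus A"
  unfolding anosov_family_torus_def
proof (rule conjI[rotated], rule exI[of _ "\<lambda>i x. stable_space A i"],
    rule exI[of _ "\<lambda>i x. unstable_space A i"], intro conjI)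
  show "\<forall>i. (\<forall>a b. A i $ a $ b \<in> \<int>) \<and> \<bar>det (A i)\<bar> = 1"
    using assms det_eq_1 by simp
  show "\<forall>i x. subspace (stable_space A i) \<and> subspace (unstable_space A i) \<and>
      stable_space A i \<inter> unstable_space A i = {0} \<and>
      (\<forall>v. \<exists>a\<in>stable_space A i. \<exists>b\<in>unstable_space A i. v = a + b)"
    using subspace_stable_space subspace_unstable_space stable_inter_unstable stable_plus_unstable
    by blast
  show "\<forall>i x. (\<lambda>v. A i *v v) ` stable_space A i = stable_space A (i + 1) \<and>
      (\<lambda>v. A i *v v) ` unstable_space A i = unstable_space A (i + 1)"
    using image_eq_if_preimage_iff[of "stable_space A", OF stable_space_Suc_iff]
      image_eq_if_preimage_iff[of "unstable_space A", OF unstable_space_Suc_iff] by blast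
  show "\<exists>lam c. 0 < lam \<and> lam < 1 \<and> 0 < c \<and>
      (\<forall>i x n v. 1 \<le> n \<longrightarrow> v \<in> stable_space A i \<longrightarrow>
         norm (fwd_cocycle A i n *v v) \<le> c * lam ^ n * norm v) \<and>
      (\<forall>i x n v. 1 \<le> n \<longrightarrow> v \<in> unstable_space A i \<longrightarrow>
         norm (bwd_cocycle A i n *v v) \<le> c * lam ^ n * norm v)"
    by (rule exI[of _ "1/2"], rule exI[of _ 2])
      (simp add: stable_space_contracts unstable_space_contracts)
qed simp_all

end

theorem corollary3p6:
  fixes F :: "int \<Rightarrow> real^2^2"
    and k :: "int \<Rightarrow> nat"
    and n :: "int \<Rightarrow> nat \<Rightarrow> nat"
  assumes nonneg_int: "\<And>i a b. F i $ a $ b \<in> \<nat>"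
    and det1: "\<And>i. det (F i) = 1"
    and k_even: "\<And>i. even (k i)"
    and k_pos: "\<And>i. 0 < k i"
    and factor: "\<And>i. F i = factor_prod (n i) (k i)"
    and last_nz: "\<And>i. n i (k i) \<noteq> 0"
    and first_nz: "\<And>i. n i 1 \<noteq> 0"
  shows "anosov_family_torus F"
proof -
  have "1 \<le> F i $ a $ b" for i a b
    using factor_prod_entries_ge_1[of "k i" "n i"] k_even k_pos last_nz first_nz factor by simp
  then interpret positive_unimodular_sequence F
    using det1 by unfold_locales
  show ?thesis
    using nonneg_int Nats_subset_Ints by (intro anosov_family_torus) blast
qed

end
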